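(* In the conditional setting described in the context, fix $\mathbf x\in\mathcal X$ and assume A1$''$, A2 and A3. If there exists $k^\star\in\{1,\dots,K\}$ with $\inf_{\mathbf w\in\mathcal W^*}w_{k^\star}>\frac12$, then $\liminf_{n\to\infty}\Pr\big(Y_{\mathbf x}\in\mathcal C_{\mathrm{comb}}(\mathbf x;\mathcal D_n)\big)\ge1-\alpha$.
   Context: Conditional setting: fix $K\ge2$ and $\alpha\in(0,1)$. For each $n$, on a common probability space there is a random data set $\mathcal D_n$. For each $k\in\{1,\dots,K\}$ and each $\mathbf x\in\mathcal X\subseteq\mathbb R^p$, $\mathcal C_k(\mathbf x;\mathcal D_n)\subseteq\mathbb R$ is a prediction set determined by $\mathcal D_n$ and $\mathbf x$. For a fixed test covariate value $\mathbf x$, $Y_{\mathbf x}$ denotes a real random variable distributed as the conditional law of the response given covariate $\mathbf x$, independent of $\mathcal D_n$; conditioning on $\{\mathbf X=\mathbf x\}$ means evaluating at $\mathbf x$ with response $Y_{\mathbf x}$. The events $\{Y_{\mathbf x}\in\mathcal C_k(\mathbf x;\mathcal D_n)\}$ are assumed measurable. Let $\Delta^{K-1}=\{\mathbf w\in[0,1]^K:w_k\ge0,\sum_k w_k=1\}$, let $\widehat{\mathbf w}_n=(\widehat w_{n,1},\dots,\widehat w_{n,K})$ be a $\sigma(\mathcal D_n)$-measurable random vector in $\Delta^{K-1}$, and let $\mathcal W^*\subseteq\Delta^{K-1}$ be a nonempty closed convex set; $\|\cdot\|$ is the Euclidean norm. A1$''$: $\sup_{k\in\{1,\dots,K\}}\big|\Pr(Y_{\mathbf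 x}\notin\mathcal C_k(\mathbf x;\mathcal D_n)\mid\mathcal D_n)-\alpha\big|\to0$ in probability as $n\to\infty$. A2: $\inf_{\mathbf w\in\mathcal W^*}\|\widehat{\mathbf w}_n-\mathbf w\|\to0$ in probability as $n\to\infty$. A3: $\mathcal C_{\mathrm{comb}}(\mathbf x;\mathcal D_n):=\{y\in\mathbb R:\sum_{k=1}^K\widehat w_{n,k}\mathbf 1\{y\in\mathcal C_k(\mathbf x;\mathcal D_n)\}>1/2\}$. *)

theory Defs
  imports "HOL-Probability.Probability"
begin

text \<open>Probability prob_simplex over the finite index type 'k (indices 1..K, K = CARD('k)).\<close>
definition prob_simplex :: "(real ^ 'k::finite) set" where
  "prob_simplex = {w. (\<forall>k. 0 \<le> w $ k) \<and> (\<Sum>k\<in>UNIV. w $ k) = 1}"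

definition comb_set :: "(real ^ 'k::finite) \<Rightarrow> ('k \<Rightarrow> real set) \<Rightarrow> real set" where
  "comb_set w C = {y. (\<Sum>k\<in>UNIV. w $ k * indicator (C k) y) > 1/2}"

definition conv_prob_zero :: "'a measure \<Rightarrow> (nat \<Rightarrow> 'a \<Rightarrow> real) \<Rightarrow> bool" where
  "conv_prob_zero M X \<longleftrightarrow>
     (\<forall>\<epsilon>>0. (\<lambda>n. measure M {\<omega> \<in> space M. \<bar>X n \<omega>\<bar> > \<epsilon>}) \<longlonglongrightarrow> 0)"

end

theory Submission
  imports Defs
begin

(* If the estimated weights are within e of W*, where expert k* has weight > 1/2, then k*
   alone carries a strict majority, so its prediction set lies inside the weighted majority
   vote set; if moreover every expert has miscoverage within e of alpha, the vote covers with
   conditional probability at least 1 - alpha - e given the data. By A1'' and A2 this holds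
   outside events of vanishing probability, and Fubini turns the conditional bound into a
   bound on the joint coverage probability. *)

lemma INF_component_le_component_plus_infdist:
  fixes v :: "real ^ 'n"
  assumes "W \<noteq> {}" "bdd_below ((\<lambda>w. w $ k) ` W)"
  shows "(INF w\<in>W. w $ k) \<le> v $ k + infdist v W"
proof -
  have "(INF w\<in>W. w $ k) - v $ k \<le> dist v a" if "a \<in> W" for a
  proof -
    have "(INF w\<in>W. w $ k) \<le> a $ k" using assms(2) that by (rule cINF_lower)
    moreover have "\<bar>(a - v) $ k\<bar> \<le> norm (a - v)" by (rule component_le_norm_cart)
    ultimately show ?thesis by (simp add: dist_norm norm_minus_commute)
  qed
  then have "(INF w\<in>W. w $ k) - v $ k \<le> (INF a\<in>W. dist v a)"
    using assms(1) by (intro cINF_greatest) auto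
  then show ?thesis using infdist_notempty[OF assms(1)] by simp
qed

lemma subset_comb_set:
  assumes "\<And>j. 0 \<le> w $ j" "1/2 < w $ k"
  shows "C k \<subseteq> comb_set w C"
proof
  fix y assume "y \<in> C k"
  then have "w $ k \<le> (\<Sum>j\<in>UNIV. w $ j * indicator (C j) y)"
    using member_le_sum[of k UNIV "\<lambda>j. w $ j * indicator (C j) y"] assms(1) by simp
  with assms(2) show "y \<in> comb_set w C" by (simp add: comb_set_def)
qed

lemma sets_comb_set:
  assumes "\<And>j. C j \<in> sets M"
  shows "comb_set w C \<in> sets M"
proof -
  have "comb_set w C \<subseteq> (\<Union>j. C j)"
    by (auto simp: comb_set_def indicator_def intro: ccontr)
  also have "\<dots> \<subseteq> space M"
    using assms sets.sets_into_space by blast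
  finally have "comb_set w C = {y \<in> space M. 1/2 < (\<Sum>j\<in>UNIV. w $ j * indicator (C j) y)}"
    by (auto simp: comb_set_def)
  moreover have "(\<lambda>y. \<Sum>j\<in>UNIV. w $ j * indicator (C j) y) \<in> borel_measurable M"
    using assms by measurable
  ultimately show ?thesis by simp
qed

lemma measure_le_measure_comb_set:
  fixes P :: "real measure"
  assumes "finite_measure P" "\<And>j. 0 \<le> w $ j" "1/2 < w $ k" "\<And>j. C j \<in> sets P"
  shows "measure P (C k) \<le> measure P (comb_set w C)"
  using assms by (intro finite_measure.finite_measure_mono subset_comb_set sets_comb_set)

lemma measure_comb_set_ge:
  fixes P :: "real measure" and C :: "'k::finite \<Rightarrow> real set"
  assumes "prob_space P" and w: "w \<in> prob_simplex" and W: "W \<subseteq> prob_simplex" "W \<noteq> {}"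
    and C: "\<And>j. C j \<in> sets P"
    and miscoverage: "(MAX j\<in>UNIV. \<bar>measure P {y \<in> space P. y \<notin> C j} - \<alpha>\<bar>) \<le> e"
    and close: "infdist w W \<le> e" "e < (INF v\<in>W. v $ k) - 1/2"
  shows "1 - \<alpha> - e \<le> measure P (comb_set w C)"
proof -
  interpret P: prob_space P by fact
  have "bdd_below ((\<lambda>v. v $ k) ` W)"
    using W(1) by (auto simp: prob_simplex_def bdd_below_def)
  with W(2) close have "1/2 < w $ k"
    using INF_component_le_component_plus_infdist[of W k w] by linarith
  moreover have "\<And>j. 0 \<le> w $ j"
    using w by (simp add: prob_simplex_def)
  ultimately have "P.prob (C k) \<le> P.prob (comb_set w C)"
    using C by (intro measure_le_measure_comb_set) (auto intro: P.finite_measure_axioms)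
  moreover have "P.prob (C k) = 1 - P.prob {y \<in> space P. y \<notin> C k}"
    using P.prob_compl[OF C[of k]] by (simp add: set_diff_eq)
  moreover have "\<bar>P.prob {y \<in> space P. y \<notin> C k} - \<alpha>\<bar>
      \<le> (MAX j\<in>UNIV. \<bar>P.prob {y \<in> space P. y \<notin> C j} - \<alpha>\<bar>)"
    by (rule Max_ge) auto
  ultimately show ?thesis
    using miscoverage by linarith
qed

lemma sets_pair_comb_set:
  fixes P :: "real measure" and C :: "'k::finite \<Rightarrow> 'd \<Rightarrow> real set"
  assumes P: "sets P = sets borel" and D: "D \<in> M \<rightarrow>\<^sub>M N" and w: "w \<in> borel_measurable N"
    and C: "\<And>k. {(d, y). y \<in> C k d} \<in> sets (N \<Otimes>\<^sub>M borel)"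
  shows "{(\<omega>, y) \<in> space M \<times> space P. y \<in> comb_set (w (D \<omega>)) (\<lambda>k. C k (D \<omega>))} \<in> sets (M \<Otimes>\<^sub>M P)"
proof -
  have [measurable]: "(\<lambda>x. (D (fst x), snd x)) \<in> M \<Otimes>\<^sub>M P \<rightarrow>\<^sub>M N \<Otimes>\<^sub>M borel"
    using D measurable_snd[of M P] by (intro measurable_Pair) (auto simp: measurable_cong_sets[OF refl P])
  have [measurable]: "(\<lambda>x. w (D (fst x)) $ k) \<in> borel_measurable (M \<Otimes>\<^sub>M P)" for k
    using measurable_compose[OF measurable_compose[OF measurable_fst D] w]
    by (rule measurable_compose) (intro borel_measurable_continuous_onI continuous_intros)
  note C[measurable]
  have "{(\<omega>, y) \<in> space M \<times> space P. y \<in> comb_set (w (D \<omega>)) (\<lambda>k. C k (D \<omega>))}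
      = {x \<in> space (M \<Otimes>\<^sub>M P). 1/2 < (\<Sum>k\<in>UNIV. w (D (fst x)) $ k *
           indicator {(d, y). y \<in> C k d} (D (fst x), snd x))}"
    by (auto simp: comb_set_def indicator_def space_pair_measure)
  also have "\<dots> \<in> sets (M \<Otimes>\<^sub>M P)" by measurable
  finally show ?thesis .
qed

lemma borel_measurable_measure_compl_section:
  fixes P :: "real measure"
  assumes "sigma_finite_measure P" and P: "sets P = sets borel"
    and C: "{(d, y). y \<in> C d} \<in> sets (N \<Otimes>\<^sub>M borel)"
  shows "(\<lambda>d. measure P {y \<in> space P. y \<notin> C d}) \<in> borel_measurable N"
proof (rule sigma_finite_measure.measurable_measure[OF assms(1)])
  have "{x \<in> space (N \<Otimes>\<^sub>M P). snd x \<in> {y \<in> space P. y \<notin> C (fst x)}}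
      = space (N \<Otimes>\<^sub>M P) - {(d, y). y \<in> C d}"
    by (auto simp: space_pair_measure)
  also have "\<dots> \<in> sets (N \<Otimes>\<^sub>M P)"
    using C sets_pair_measure_cong[OF refl P, of N] by auto
  finally show "{x \<in> space (N \<Otimes>\<^sub>M P). snd x \<in> {y \<in> space P. y \<notin> C (fst x)}} \<in> sets (N \<Otimes>\<^sub>M P)" .
qed auto

lemma measure_pair_eq_integral_section:
  assumes "prob_space M" "prob_space P"
    and A: "{(\<omega>, y) \<in> space M \<times> space P. y \<in> A \<omega>} \<in> sets (M \<Otimes>\<^sub>M P)"
  shows "integrable M (\<lambda>\<omega>. measure P (A \<omega> \<inter> space P))"
    and "measure (M \<Otimes>\<^sub>M P) {(\<omega>, y) \<in> space M \<times> space P. y \<in> A \<omega>}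
      = (\<integral>\<omega>. measure P (A \<omega> \<inter> space P) \<partial>M)"
proof -
  interpret M: prob_space M by fact
  interpret P: prob_space P by fact
  let ?S = "{(\<omega>, y) \<in> space M \<times> space P. y \<in> A \<omega>}"
  have "?S = {x \<in> space (M \<Otimes>\<^sub>M P). snd x \<in> A (fst x) \<inter> space P}"
    by (auto simp: space_pair_measure)
  with A have "(\<lambda>\<omega>. measure P (A \<omega> \<inter> space P)) \<in> borel_measurable M"
    by (intro P.measurable_measure) auto
  then show int: "integrable M (\<lambda>\<omega>. measure P (A \<omega> \<inter> space P))"
    by (intro M.integrable_const_bound[where B=1]) auto
  have "emeasure (M \<Otimes>\<^sub>M P) ?S = (\<integral>\<^sup>+\<omega>. emeasure P (Pair \<omega> -` ?S) \<partial>M)"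
    by (rule P.emeasure_pair_measure_alt[OF A])
  also have "\<dots> = (\<integral>\<^sup>+\<omega>. ennreal (measure P (A \<omega> \<inter> space P)) \<partial>M)"
    by (intro nn_integral_cong) (auto simp: P.emeasure_eq_measure intro!: arg_cong[where f="measure P"])
  also have "\<dots> = ennreal (\<integral>\<omega>. measure P (A \<omega> \<inter> space P) \<partial>M)"
    by (rule nn_integral_eq_integral[OF int]) auto
  finally show "measure (M \<Otimes>\<^sub>M P) ?S = (\<integral>\<omega>. measure P (A \<omega> \<inter> space P) \<partial>M)"
    by (simp add: measure_def)
qed

lemma (in prob_space) integral_ge_off_event:
  assumes h: "integrable M h" "\<And>\<omega>. \<omega> \<in> space M \<Longrightarrow> 0 \<le> h \<omega>"
    and B: "B \<in> events"
    and c: "c \<le> 1" "\<And>\<omega>. \<omega> \<in> space M - B \<Longrightarrow> c \<le> h \<omega>"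
  shows "c - prob B \<le> expectation h"
proof -
  have "c - prob B = expectation (\<lambda>\<omega>. c - indicator B \<omega>)"
    using B by (subst Bochner_Integration.integral_diff) (auto simp: emeasure_eq_measure prob_space)
  also have "\<dots> \<le> expectation h"
  proof (rule integral_mono)
    show "integrable M (\<lambda>\<omega>. c - indicator B \<omega>)"
      using B by (simp add: emeasure_eq_measure)
    show "c - indicator B \<omega> \<le> h \<omega>" if "\<omega> \<in> space M" for \<omega>
      using that h(2)[of \<omega>] c by (cases "\<omega> \<in> B") auto
  qed (rule h(1))
  finally show ?thesis .
qed

lemma ereal_le_liminf_if_eventually_ge:
  fixes a :: "nat \<Rightarrow> real"
  assumes "\<And>e. 0 < e \<Longrightarrow> eventually (\<lambda>n. c - e \<le> a n) sequentially"
  shows "ereal c \<le> liminf (\<lambda>n. ereal (a n))"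
proof (subst le_Liminf_iff, intro allI impI)
  fix y assume y: "y < ereal c"
  show "eventually (\<lambda>n. y < ereal (a n)) sequentially"
  proof (cases y)
    case (real r)
    with y have "r < c" by simp
    then have "0 < (c - r) / 2" by simp
    from assms[OF this] have "eventually (\<lambda>n. r < a n) sequentially"
      by (rule eventually_mono) (use \<open>r < c\<close> in \<open>simp add: field_simps\<close>)
    then show ?thesis by (simp add: real)
  qed (use y in auto)
qed

lemma conv_prob_zero_max_abs:
  assumes X: "\<And>n. X n \<in> borel_measurable M" "conv_prob_zero M X"
    and Y: "\<And>n. Y n \<in> borel_measurable M" "conv_prob_zero M Y"
  shows "conv_prob_zero M (\<lambda>n \<omega>. max \<bar>X n \<omega>\<bar> \<bar>Y n \<omega>\<bar>)"
  unfolding conv_prob_zero_def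
proof (intro allI impI)
  fix \<epsilon> :: real assume "0 < \<epsilon>"
  define E where "E Z n = {\<omega> \<in> space M. \<epsilon> < \<bar>Z n \<omega>\<bar>}" for Z :: "nat \<Rightarrow> 'a \<Rightarrow> real" and n
  have E_sets: "E X n \<in> sets M" "E Y n \<in> sets M" for n
    unfolding E_def using X(1)[of n] Y(1)[of n] by measurable
  have "E (\<lambda>n \<omega>. max \<bar>X n \<omega>\<bar> \<bar>Y n \<omega>\<bar>) n = E X n \<union> E Y n" for n
    by (auto simp: E_def less_max_iff_disj)
  then have le: "\<forall>n. measure M (E (\<lambda>n \<omega>. max \<bar>X n \<omega>\<bar> \<bar>Y n \<omega>\<bar>) n)
      \<le> measure M (E X n) + measure M (E Y n)"
    using measure_Un_le[OF E_sets] by simp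
  have lim: "(\<lambda>n. measure M (E X n) + measure M (E Y n)) \<longlonglongrightarrow> 0"
    using X(2) Y(2) \<open>0 < \<epsilon>\<close> unfolding conv_prob_zero_def E_def by (intro tendsto_add_zero) auto
  have "(\<lambda>n. measure M (E (\<lambda>n \<omega>. max \<bar>X n \<omega>\<bar> \<bar>Y n \<omega>\<bar>) n)) \<longlonglongrightarrow> 0"
    by (rule tendsto_sandwich[OF always_eventually always_eventually[OF le] tendsto_const lim]) simp
  then show "(\<lambda>n. measure M {\<omega> \<in> space M. \<epsilon> < \<bar>max \<bar>X n \<omega>\<bar> \<bar>Y n \<omega>\<bar>\<bar>}) \<longlonglongrightarrow> 0"
    by (simp add: E_def)
qed

lemma liminf_measure_pair_ge:
  assumes M: "prob_space M" and P: "prob_space P"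
    and A: "\<And>n. {(\<omega>, y) \<in> space M \<times> space P. y \<in> A n \<omega>} \<in> sets (M \<Otimes>\<^sub>M P)"
    and X: "\<And>n. X n \<in> borel_measurable M" "conv_prob_zero M X"
    and "0 < e\<^sub>0"
    and cover: "\<And>n e \<omega>. 0 < e \<Longrightarrow> e < e\<^sub>0 \<Longrightarrow> \<omega> \<in> space M \<Longrightarrow> \<bar>X n \<omega>\<bar> \<le> e \<Longrightarrow>
      c - e \<le> measure P (A n \<omega> \<inter> space P)"
    and "c \<le> 1"
  shows "ereal c \<le> liminf (\<lambda>n. ereal (measure (M \<Otimes>\<^sub>M P) {(\<omega>, y) \<in> space M \<times> space P. y \<in> A n \<omega>}))"
proof (rule ereal_le_liminf_if_eventually_ge)
  interpret M: prob_space M by (rule M)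
  fix e :: real assume "0 < e"
  \<comment> \<open>e' pays once for the conditional deficit and once for the bad event\<close>
  define e' where "e' = min (e / 2) (e\<^sub>0 / 2)"
  have e': "0 < e'" "e' < e\<^sub>0" "2 * e' \<le> e"
    using \<open>0 < e\<close> \<open>0 < e\<^sub>0\<close> by (auto simp: e'_def)
  define B where "B n = {\<omega> \<in> space M. e' < \<bar>X n \<omega>\<bar>}" for n
  have B_sets: "B n \<in> sets M" for n
    using X(1)[of n] unfolding B_def by measurable
  from X(2) e'(1) have "(\<lambda>n. measure M (B n)) \<longlonglongrightarrow> 0"
    by (simp add: conv_prob_zero_def B_def)
  from order_tendstoD(2)[OF this e'(1)]
  show "eventually (\<lambda>n. c - e \<le> measure (M \<Otimes>\<^sub>M P) {(\<omega>, y) \<in> space M \<times> space P. y \<in> A n \<omega>})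
    sequentially"
  proof eventually_elim
    case (elim n)
    have "c - e' - M.prob (B n) \<le> (\<integral>\<omega>. measure P (A n \<omega> \<inter> space P) \<partial>M)"
      using measure_pair_eq_integral_section(1)[OF M P A] B_sets cover e' \<open>c \<le> 1\<close>
      by (intro M.integral_ge_off_event) (auto simp: B_def)
    with elim e'(3) show ?case
      unfolding measure_pair_eq_integral_section(2)[OF M P A] by linarith
  qed
qed

theorem theorem4:
  fixes M :: "'a measure" and N :: "'d measure" and Py :: "real measure"
    and D :: "nat \<Rightarrow> 'a \<Rightarrow> 'd"
    and C :: "nat \<Rightarrow> 'k::finite \<Rightarrow> 'd \<Rightarrow> real set"
    and w_hat :: "nat \<Rightarrow> 'd \<Rightarrow> real ^ 'k"
    and W_star :: "(real ^ 'k) set"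
    and \<alpha> :: real
  assumes K2: "CARD('k) \<ge> 2"
    and alpha: "0 < \<alpha>" "\<alpha> < 1"
    and M: "prob_space M"
    and Py: "prob_space Py" "sets Py = sets borel"
    and D_meas: "\<And>n. D n \<in> M \<rightarrow>\<^sub>M N"
    and C_meas: "\<And>n k. {(d, y). y \<in> C n k d} \<in> sets (N \<Otimes>\<^sub>M borel)"
    and w_meas: "\<And>n. w_hat n \<in> borel_measurable N"
    and w_simplex: "\<And>n d. w_hat n d \<in> prob_simplex"
    and Wstar: "W_star \<subseteq> prob_simplex" "W_star \<noteq> {}" "closed W_star" "convex W_star"
    and A1: "conv_prob_zero M
               (\<lambda>n \<omega>. MAX k\<in>UNIV. \<bar>measure Py {y \<in> space Py. y \<notin> C n k (D n \<omega>)} - \<alpha>\<bar>)"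
    and A2: "conv_prob_zero M (\<lambda>n \<omega>. infdist (w_hat n (D n \<omega>)) W_star)"
    and kstar: "\<exists>k. (INF w\<in>W_star. w $ k) > 1/2"
  shows "liminf (\<lambda>n. ereal (measure (M \<Otimes>\<^sub>M Py)
            {(\<omega>, y) \<in> space M \<times> space Py.
               y \<in> comb_set (w_hat n (D n \<omega>)) (\<lambda>k. C n k (D n \<omega>))}))
         \<ge> ereal (1 - \<alpha>)"
proof -
  interpret P: prob_space Py by (rule Py(1))
  obtain ks where ks: "1/2 < (INF w\<in>W_star. w $ ks)"
    using kstar by blast
  define miscov where
    "miscov = (\<lambda>n \<omega>. MAX k\<in>UNIV. \<bar>measure Py {y \<in> space Py. y \<notin> C n k (D n \<omega>)} - \<alpha>\<bar>)"
  define dist_W where "dist_W = (\<lambda>n \<omega>. infdist (w_hat n (D n \<omega>)) W_star)"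
  have C_sets: "C n k d \<in> sets Py" for n k d
    using sets_Pair1[OF C_meas[of n k], of d] Py(2) by simp
  have miscov_meas: "miscov n \<in> borel_measurable M" for n
    using borel_measurable_measure_compl_section[OF P.sigma_finite_measure_axioms Py(2) C_meas]
    unfolding miscov_def by (intro borel_measurable_Max measurable_compose[OF D_meas]) auto
  have dist_W_meas: "dist_W n \<in> borel_measurable M" for n
    unfolding dist_W_def
    by (intro borel_measurable_continuous_on[OF _ measurable_compose[OF D_meas w_meas]] continuous_intros)
  show ?thesis
  proof (rule liminf_measure_pair_ge[OF M Py(1) sets_pair_comb_set[OF Py(2) D_meas w_meas C_meas] _
        conv_prob_zero_max_abs[OF miscov_meas A1[folded miscov_def] dist_W_meas A2[folded dist_W_def]]])
    fix n e \<omega>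
    assume "e < (INF w\<in>W_star. w $ ks) - 1/2" "\<bar>max \<bar>miscov n \<omega>\<bar> \<bar>dist_W n \<omega>\<bar>\<bar> \<le> e"
    moreover from this(2) have "miscov n \<omega> \<le> e" "dist_W n \<omega> \<le> e"
      by auto
    ultimately show "1 - \<alpha> - e \<le> measure Py (comb_set (w_hat n (D n \<omega>)) (\<lambda>k. C n k (D n \<omega>)) \<inter> space Py)"
      using measure_comb_set_ge[OF Py(1) w_simplex Wstar(1,2) C_sets]
      unfolding miscov_def dist_W_def sets_eq_imp_space_eq[OF Py(2)] by simp
  qed (use ks alpha miscov_meas dist_W_meas in \<open>auto intro!: borel_measurable_max borel_measurable_abs\<close>)
qed

end
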